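(* Let $a,b$ be positive integers and $c,d$ nonnegative integers, let $W(x)=\operatorname{Asc}(x,a-1)\operatorname{Asc}(x,b-1)\operatorname{Desc}(x,c-1)\operatorname{Desc}(x,d-1)$, $C_{a,b,c,d}=\Psi(x^2W(x))$, and for $n\ge1$ let $M(n)$ be the $n\times n$ matrix with entries $\Psi(x^{i+j+2}W(x))$, $0\le i,j\le n-1$. Then $$\det M(n)=(-q^{c+d})^{\binom n2}q^{\binom n3}C_{a,b,c,d}^{\,n}\prod_{i=1}^{n-1}\left(\frac{[i]_q[a+c+i-1]_q[b+c+i-1]_q[a+d+i-1]_q[b+d+i-1]_q[a+b+c+d+i-2]_q}{[a+b+c+d+2i-3]_q[a+b+c+d+2i-2]_q^2[a+b+c+d+2i-1]_q}\right)^{n-i}.$$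
   Context: $q$ is an indeterminate; work over $\mathbb{Q}(q)$. The $q$-Bernoulli–Carlitz numbers $\beta_n$ are defined by: for all $n\ge0$, $q\sum_{k=0}^{n}\binom{n}{k}q^k\beta_k-\beta_n$ equals $q-1$ if $n=0$, $1$ if $n=1$, $0$ if $n>1$. $\Psi$ is the linear form on $\mathbb{Q}(q)[x]$ with $\Psi(x^n)=\beta_n$. $[m]_q=(q^m-1)/(q-1)$. $\operatorname{Asc}(x,0)=1$ and $\operatorname{Asc}(x,a)=\prod_{i=1}^a([i]_q+q^ix)$ for $a\ge1$; $\operatorname{Desc}(x,-1)=-1/x$, $\operatorname{Desc}(x,0)=1$, $\operatorname{Desc}(x,a)=\prod_{i=1}^a([i]_q-x)$ for $a\ge1$ (so $x^2W(x)$ is a polynomial). *)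

theory Defs
  imports "HOL-Computational_Algebra.Computational_Algebra" "Jordan_Normal_Form.Determinant"
begin

type_synonym qf = "rat poly fract"

definition qq :: qf where "qq = Fract [:0, 1:] 1"

definition qint :: "nat \<Rightarrow> qf" where "qint m = (qq ^ m - 1) / (qq - 1)"

text \<open>q-Bernoulli-Carlitz numbers, obtained by solving the defining relation
  q * sum_{k=0}^n binom(n,k) q^k beta_k - beta_n = rhs n for beta_n
  (the coefficient of beta_n is q^(n+1) - 1, nonzero).\<close>
definition carlitz_rhs :: "nat \<Rightarrow> qf" where
  "carlitz_rhs n = (if n = 0 then qq - 1 else if n = 1 then 1 else 0)"

function beta :: "nat \<Rightarrow> qf" where
  "beta n = (carlitz_rhs n - qq * (\<Sum>k<n. of_nat (n choose k) * qq ^ k * beta k))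
              / (qq ^ (n + 1) - 1)"
  by auto
termination by (relation "measure id") auto

definition Psi :: "qf poly \<Rightarrow> qf" where
  "Psi p = (\<Sum>i\<le>degree p. coeff p i * beta i)"

definition Asc :: "nat \<Rightarrow> qf poly" where
  "Asc m = (\<Prod>i=1..m. [:qint i, qq ^ i:])"

definition Desc :: "nat \<Rightarrow> qf poly" where
  "Desc m = (\<Prod>i=1..m. [:qint i, -1:])"

text \<open>xDesc c = x * Desc(x, c-1) for c a nonnegative integer; for c = 0 this is
  x * (-1/x) = -1.\<close>
definition xDesc :: "nat \<Rightarrow> qf poly" where
  "xDesc c = (if c = 0 then -1 else [:0, 1:] * Desc (c - 1))"

text \<open>x^2 W(x) = Asc(x,a-1) Asc(x,b-1) (x Desc(x,c-1)) (x Desc(x,d-1)).\<close>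
definition x2W :: "nat \<Rightarrow> nat \<Rightarrow> nat \<Rightarrow> nat \<Rightarrow> qf poly" where
  "x2W a b c d = Asc (a - 1) * Asc (b - 1) * xDesc c * xDesc d"

definition Cabcd :: "nat \<Rightarrow> nat \<Rightarrow> nat \<Rightarrow> nat \<Rightarrow> qf" where
  "Cabcd a b c d = Psi (x2W a b c d)"

definition Mmat :: "nat \<Rightarrow> nat \<Rightarrow> nat \<Rightarrow> nat \<Rightarrow> nat \<Rightarrow> qf mat" where
  "Mmat a b c d n = mat n n (\<lambda>(i, j). Psi (monom 1 (i + j) * x2W a b c d))"

end

theory Submission
  imports Defs
begin

text \<open>The functional \<open>\<Psi>\<close> is characterised by the functional equation
  \<open>q \<Psi>(p(1 + q x)) - \<Psi>(p) = (q - 1) p(0) + p'(0)\<close>. The substitution \<open>x \<mapsto> 1 + q x\<close>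
  shifts the factors of \<open>Asc\<close> and \<open>Desc\<close> by one, so the equation yields recurrences that
  evaluate every moment \<open>\<Psi>(Asc(x,a) Asc(x,b) x Desc(x,c) x Desc(x,d))\<close> as a product of
  \<open>q\<close>-factorials. The Hankel matrix is then brought to triangular form by multiplying it on
  the left by the products \<open>([d]\<^sub>q - x) \<cdots> ([d+j-1]\<^sub>q - x)\<close> and on the right by suitable
  \<open>k\<close>-th \<open>q\<close>-differences \<open>P\<^sub>k\<close> of the products \<open>([c]\<^sub>q - x) \<cdots> ([c+m-1]\<^sub>q - x)\<close>: for
  \<open>j < k\<close> the pairing is the \<open>k\<close>-th \<open>q\<close>-difference of a polynomial of degree less than \<open>k\<close>
  in \<open>q\<^sup>-\<^sup>m\<close>, hence zero, and the diagonal pairings are explicit. The consecutive ratios of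
  the diagonal entries give the product formula.\<close>

section \<open>q-integers and q-factorials\<close>

lemma qq_power: "qq ^ m = Fract (monom 1 m) 1"
  by (induct m) (auto simp: qq_def monom_Suc One_fract_def)

lemma qq_nonzero [simp]: "qq \<noteq> 0"
  unfolding qq_def by (simp add: Zero_fract_def eq_fract)

lemma qq_power_neq_1: "m > 0 \<Longrightarrow> qq ^ m \<noteq> 1"
proof
  assume m: "m > 0" and "qq ^ m = 1"
  then have "monom (1::rat) m = 1"
    by (simp add: qq_power One_fract_def eq_fract)
  then have "degree (monom (1::rat) m) = 0" by simp
  then show False using m by (simp add: degree_monom_eq)
qed

lemma qq_neq_1 [simp]: "qq \<noteq> 1"
  using qq_power_neq_1[of 1] by simp

lemma qq_power_minus_1: "qq ^ m - 1 = (qq - 1) * qint m"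
  by (simp add: qint_def)

lemma qint_0 [simp]: "qint 0 = 0"
  by (simp add: qint_def)

lemma qint_1 [simp]: "qint (Suc 0) = 1"
  by (simp add: qint_def)

lemma qint_add: "qint (m + n) = qint m + qq ^ m * qint n"
proof -
  have "qq ^ (m + n) - 1 = (qq ^ m - 1) + qq ^ m * (qq ^ n - 1)"
    by (simp add: power_add algebra_simps)
  then show ?thesis
    unfolding qint_def by (simp add: diff_divide_distrib[symmetric] add_divide_distrib[symmetric])
qed

lemma qint_Suc: "qint (Suc m) = 1 + qq * qint m"
  using qint_add[of 1 m] by simp

lemma qint_Suc': "qint (Suc m) = qint m + qq ^ m"
  using qint_add[of m 1] by simp

lemma qint_nonzero: "m > 0 \<Longrightarrow> qint m \<noteq> 0"
  using qq_power_neq_1[of m] by (simp add: qint_def)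

lemma qint_Suc_nonzero [simp]: "qint (Suc m) \<noteq> 0"
  by (simp add: qint_nonzero)

definition qfact :: "nat \<Rightarrow> qf" where
  "qfact n = (\<Prod>i=1..n. qint i)"

lemma qfact_0 [simp]: "qfact 0 = 1"
  by (simp add: qfact_def)

lemma qfact_Suc: "qfact (Suc n) = qfact n * qint (Suc n)"
  by (simp add: qfact_def prod.nat_ivl_Suc' mult.commute)

lemma qfact_nonzero [simp]: "qfact n \<noteq> 0"
  by (simp add: qfact_def qint_nonzero)

lemma qfact_add: "qfact (n + t) = qfact n * (\<Prod>i<t. qint (n + 1 + i))"
  by (induct t) (simp_all add: qfact_Suc mult.assoc)

lemma qfact_ratio_Suc:
  "qfact (Suc k) * qfact (n + Suc k) / qfact (Suc (n + Suc k) + Suc k)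
   = qfact k * qfact (n + k) / qfact (Suc (n + k) + k)
     * (qint (Suc k) * qint (Suc (n + k)) / (qint (n + 2 * k + 2) * qint (n + 2 * k + 3)))"
  by (simp add: qfact_Suc field_simps eval_nat_numeral)


section \<open>Linear functionals on polynomials and Hankel determinants\<close>

locale linear_poly_functional =
  fixes L :: "'a::comm_ring_1 poly \<Rightarrow> 'a"
  assumes add: "L (p + r) = L p + L r"
    and smult: "L (Polynomial.smult c p) = c * L p"
begin

lemma zero [simp]: "L 0 = 0"
  using smult[of 0 0] by simp

lemma uminus: "L (- p) = - L p"
  using smult[of "-1" p] by simp

lemma diff: "L (p - r) = L p - L r"
  using add[of p "- r"] by (simp add: uminus)

lemma sum: "L (\<Sum>i\<in>A. f i) = (\<Sum>i\<in>A. L (f i))"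
  by (induct A rule: infinite_finite_induct) (auto simp: add)

lemma mult_expand:
  assumes "degree r < n"
  shows "L (p * r) = (\<Sum>l<n. coeff r l * L (p * monom 1 l))"
proof -
  have "r = (\<Sum>l<n. monom (coeff r l) l)"
    using assms by (intro poly_eqI) (auto simp: coeff_sum coeff_monom coeff_eq_0)
  then have "p * r = p * (\<Sum>l<n. Polynomial.smult (coeff r l) (monom 1 l))"
    by (simp add: smult_monom)
  also have "\<dots> = (\<Sum>l<n. Polynomial.smult (coeff r l) (p * monom 1 l))"
    by (simp add: sum_distrib_left)
  finally show ?thesis by (simp add: sum smult)
qed

lemma mult_right: "linear_poly_functional (\<lambda>p. L (p * X))"
  by unfold_locales (simp_all add: distrib_right add smult)

end

lemma det_mat_lower_triangular:
  assumes "\<And>i j. i < j \<Longrightarrow> j < n \<Longrightarrow> f (i, j) = 0"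
  shows "det (mat n n f) = (\<Prod>i<n. f (i, i))"
proof -
  have "det (mat n n f) = prod_list (diag_mat (mat n n f))"
    by (rule det_lower_triangular[of n]) (use assms in auto)
  then show ?thesis by (simp add: prod_list_diag_prod atLeast0LessThan)
qed

lemma det_mat_upper_triangular:
  assumes "\<And>i j. j < i \<Longrightarrow> i < n \<Longrightarrow> f (i, j) = 0"
  shows "det (mat n n f) = (\<Prod>i<n. f (i, i))"
proof -
  have "det (mat n n f) = prod_list (diag_mat (mat n n f))"
    by (rule det_upper_triangular[of _ n]) (use assms in \<open>auto simp: upper_triangular_def\<close>)
  then show ?thesis by (simp add: prod_list_diag_prod atLeast0LessThan)
qed

context linear_poly_functional
begin

text \<open>Multiplying the Hankel matrix of moments by the coefficient matrices of two triangular
  families of polynomials gives the Gram matrix of the families, which is triangular when they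
  are biorthogonal.\<close>

lemma hankel_det_biorthogonal:
  fixes F P :: "nat \<Rightarrow> 'a poly"
  assumes deg_F: "\<And>j. j < n \<Longrightarrow> degree (F j) \<le> j"
    and deg_P: "\<And>k. k < n \<Longrightarrow> degree (P k) \<le> k"
    and orthogonal: "\<And>j k. j < k \<Longrightarrow> k < n \<Longrightarrow> L (F j * P k) = 0"
  shows "(\<Prod>j<n. coeff (F j) j) * det (mat n n (\<lambda>(i, j). L (monom 1 (i + j))))
           * (\<Prod>k<n. coeff (P k) k) = (\<Prod>k<n. L (F k * P k))"
proof -
  define M where "M = mat n n (\<lambda>(i, j). L (monom 1 (i + j)))"
  define Fm where "Fm = mat n n (\<lambda>(j, i). coeff (F j) i)"
  define Pm where "Pm = mat n n (\<lambda>(i, k). coeff (P k) i)"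
  have carrier: "M \<in> carrier_mat n n" "Fm \<in> carrier_mat n n" "Pm \<in> carrier_mat n n"
    unfolding M_def Fm_def Pm_def by auto
  have FM: "(Fm * M) $$ (j, l) = L (F j * monom 1 l)" if "j < n" "l < n" for j l
  proof -
    have "(Fm * M) $$ (j, l) = (\<Sum>i<n. coeff (F j) i * L (monom 1 l * monom 1 i))"
      using that by (simp add: Fm_def M_def scalar_prod_def atLeast0LessThan mult_monom add.commute)
    also have "\<dots> = L (F j * monom 1 l)"
      using mult_expand[of "F j" n "monom 1 l"] deg_F[OF that(1)] that(1)
      by (simp add: mult.commute)
    finally show ?thesis .
  qed
  have "Fm * M * Pm = mat n n (\<lambda>(j, k). L (F j * P k))"
  proof (rule eq_matI)
    fix j k assume jk: "j < dim_row (mat n n (\<lambda>(j, k). L (F j * P k)))"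
      "k < dim_col (mat n n (\<lambda>(j, k). L (F j * P k)))"
    then have "(Fm * M * Pm) $$ (j, k) = (\<Sum>l<n. (Fm * M) $$ (j, l) * coeff (P k) l)"
      using carrier by (simp add: Pm_def scalar_prod_def atLeast0LessThan)
    also have "\<dots> = (\<Sum>l<n. coeff (P k) l * L (F j * monom 1 l))"
      using jk by (simp add: FM mult.commute)
    also have "\<dots> = L (F j * P k)"
      using mult_expand[of "P k" n "F j"] deg_P jk by fastforce
    finally show "(Fm * M * Pm) $$ (j, k) = mat n n (\<lambda>(j, k). L (F j * P k)) $$ (j, k)"
      using jk by simp
  qed (use carrier in auto)
  then have "det (Fm * M * Pm) = (\<Prod>k<n. L (F k * P k))"
    by (simp add: det_mat_lower_triangular orthogonal)
  moreover have "det Fm = (\<Prod>j<n. coeff (F j) j)"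
    unfolding Fm_def
    by (subst det_mat_lower_triangular) (auto intro: coeff_eq_0 le_less_trans[OF deg_F] less_trans)
  moreover have "det Pm = (\<Prod>k<n. coeff (P k) k)"
    unfolding Pm_def
    by (subst det_mat_upper_triangular) (auto intro: coeff_eq_0 le_less_trans[OF deg_P] less_trans)
  moreover have "det (Fm * M * Pm) = det Fm * det M * det Pm"
    using carrier by (simp add: det_mult[of _ n])
  ultimately show ?thesis unfolding M_def by simp
qed

end

section \<open>The Carlitz functional\<close>

declare beta.simps [simp del]

lemma beta_0: "beta 0 = 1"
  using beta.simps[of 0] by (simp add: carlitz_rhs_def)

lemma beta_recurrence:
  "qq * (\<Sum>k\<le>n. of_nat (n choose k) * qq ^ k * beta k) - beta n = carlitz_rhs n"
proof -
  have "qq ^ (n + 1) - 1 \<noteq> 0"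
    using qq_power_neq_1[of "n + 1"] by simp
  then have "beta n * (qq ^ (n + 1) - 1)
      = carlitz_rhs n - qq * (\<Sum>k<n. of_nat (n choose k) * qq ^ k * beta k)"
    by (subst beta.simps) simp
  then show ?thesis
    by (simp add: lessThan_Suc_atMost[symmetric] algebra_simps)
qed

lemma Psi_eq_sum: "degree p \<le> N \<Longrightarrow> Psi p = (\<Sum>i\<le>N. coeff p i * beta i)"
  unfolding Psi_def by (rule sum.mono_neutral_left) (auto simp: coeff_eq_0)

interpretation Psi: linear_poly_functional Psi
proof
  fix p r :: "qf poly" and c :: qf
  let ?N = "max (degree p) (degree r)"
  have "degree (p + r) \<le> ?N"
    by (meson degree_add_le max.cobounded1 max.cobounded2)
  then show "Psi (p + r) = Psi p + Psi r"
    by (simp add: Psi_eq_sum[of _ ?N] sum.distrib distrib_right)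
  show "Psi (Polynomial.smult c p) = c * Psi p"
    by (simp add: Psi_eq_sum[of _ "degree p"] degree_smult_le sum_distrib_left mult.assoc)
qed

lemma Psi_monom: "Psi (monom c n) = c * beta n"
  by (simp add: Psi_eq_sum[of _ n] degree_monom_le coeff_monom mult_delta_left)

lemma Psi_1: "Psi 1 = 1"
  using Psi_monom[of 1 0] by (simp add: beta_0 monom_0 one_pCons)

abbreviation px :: "qf poly" where "px \<equiv> [:0, 1:]"

text \<open>The defining recurrence of the Carlitz numbers says exactly how \<open>\<Psi>\<close> transforms under
  the substitution \<open>x \<mapsto> 1 + q x\<close>.\<close>

abbreviation qshift :: "qf poly \<Rightarrow> qf poly" where "qshift p \<equiv> pcompose p [:1, qq:]"

lemma Psi_qshift: "qq * Psi (qshift p) - Psi p = (qq - 1) * coeff p 0 + coeff p 1"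
proof -
  define N where "N = Suc (degree p)"
  have p: "p = (\<Sum>i\<le>N. monom (coeff p i) i)"
    by (rule poly_as_sum_of_monoms'[symmetric]) (simp add: N_def)
  have monom: "qshift (monom c i) = Polynomial.smult c ([:1, qq:] ^ i)" for c i
    by (induct i) (auto simp: monom_Suc pcompose_pCons monom_0)
  have power: "Psi ([:1, qq:] ^ i) = (\<Sum>k\<le>i. of_nat (i choose k) * qq ^ k * beta k)" for i
  proof -
    have "degree ([:1, qq:] ^ i) \<le> i"
      using degree_power_le[of "[:1, qq:]" i] by simp
    then show ?thesis
      by (simp add: Psi_eq_sum[of _ i] coeff_linear_poly_power)
  qed
  have "qq * Psi (qshift p) - Psi p
      = (\<Sum>i\<le>N. coeff p i * (qq * Psi ([:1, qq:] ^ i) - beta i))"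
    by (subst (1 2) p)
      (simp add: pcompose_sum monom Psi.sum Psi.smult Psi_monom sum_distrib_left
        sum_subtractf algebra_simps)
  also have "\<dots> = (\<Sum>i\<le>N. (if i = 0 then (qq - 1) * coeff p 0 else 0)
      + (if i = 1 then coeff p 1 else 0))"
    by (rule sum.cong) (auto simp: power beta_recurrence carlitz_rhs_def)
  also have "\<dots> = (qq - 1) * coeff p 0 + coeff p 1"
    by (simp add: sum.distrib N_def)
  finally show ?thesis .
qed

lemma Psi_qshift_px_mult: "qq * Psi (qshift (px * g)) - Psi (px * g) = poly g 0"
  using Psi_qshift[of "px * g"] by (simp add: poly_0_coeff_0)

lemma Psi_qshift_px2_mult: "qq * Psi (qshift (px * (px * g))) = Psi (px * (px * g))"
  using Psi_qshift[of "px * (px * g)"] by simp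


section \<open>Moments of products of ascending and descending factors\<close>

lemma Asc_0 [simp]: "Asc 0 = 1"
  by (simp add: Asc_def)

lemma Asc_Suc: "Asc (Suc m) = Asc m * [:qint (Suc m), qq ^ Suc m:]"
  by (simp add: Asc_def prod.nat_ivl_Suc')

lemma Desc_0 [simp]: "Desc 0 = 1"
  by (simp add: Desc_def)

lemma Desc_Suc: "Desc (Suc m) = Desc m * [:qint (Suc m), -1:]"
  by (simp add: Desc_def prod.nat_ivl_Suc')

lemma xDesc_0 [simp]: "xDesc 0 = -1"
  by (simp add: xDesc_def)

lemma xDesc_Suc: "xDesc (Suc c) = px * Desc c"
  by (simp add: xDesc_def)

lemma xDesc_mult_linear: "xDesc c * [:qint c, -1:] = xDesc (Suc c)"
  by (cases c) (simp_all add: xDesc_def Desc_Suc mult.assoc)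

lemma poly_Asc_0: "poly (Asc m) 0 = qfact m"
  by (simp add: Asc_def qfact_def poly_prod)

lemma poly_Desc_0: "poly (Desc m) 0 = qfact m"
  by (simp add: Desc_def qfact_def poly_prod)

lemma qshift_linear: "qshift [:u, v:] = [:u + v, v * qq:]"
  by (simp add: pcompose_pCons)

lemma qshift_px_mult_Asc: "qshift (px * Asc m) = Asc (Suc m)"
proof (induct m)
  case 0
  then show ?case by (simp add: Asc_Suc pcompose_pCons)
next
  case (Suc m)
  have "qshift (px * Asc (Suc m)) = qshift (px * Asc m) * qshift [:qint (Suc m), qq ^ Suc m:]"
    by (simp only: Asc_Suc pcompose_mult mult.assoc)
  also have "\<dots> = Asc (Suc (Suc m))"
    unfolding Suc qshift_linear by (simp add: Asc_Suc qint_Suc'[of "Suc m"] mult.commute)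
  finally show ?case .
qed

lemma qshift_Desc: "qshift (Desc c) = Polynomial.smult (- (qq ^ c)) (xDesc c)"
proof (induct c)
  case 0
  then show ?case by (simp add: pcompose_1)
next
  case (Suc c)
  have linear: "qshift [:qint (Suc c), -1:] = Polynomial.smult qq [:qint c, -1:]"
    unfolding qshift_linear by (simp add: qint_Suc)
  have "qshift (Desc (Suc c))
      = Polynomial.smult (- (qq ^ c)) (xDesc c) * Polynomial.smult qq [:qint c, -1:]"
    by (simp only: Desc_Suc pcompose_mult Suc linear)
  also have "\<dots> = Polynomial.smult (qq * - (qq ^ c)) (xDesc (Suc c))"
    by (simp only: mult_smult_left mult_smult_right smult_smult xDesc_mult_linear)
  finally show ?case by (simp add: mult.commute)
qed

lemma Psi_px_mult_Asc:
  "Psi (px * Asc m * g) = (Psi (Asc (Suc m) * g) - qint (Suc m) * Psi (Asc m * g)) / qq ^ Suc m"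
proof -
  have "Polynomial.smult (qq ^ Suc m) (px * Asc m * g)
      = Asc (Suc m) * g - Polynomial.smult (qint (Suc m)) (Asc m * g)"
    by (simp add: Asc_Suc algebra_simps)
  then have "qq ^ Suc m * Psi (px * Asc m * g)
      = Psi (Asc (Suc m) * g) - qint (Suc m) * Psi (Asc m * g)"
    by (metis Psi.diff Psi.smult)
  then show ?thesis
    by (simp add: field_simps del: power_Suc)
qed

lemma Psi_Asc: "Psi (Asc n) = qfact n / qint (Suc n)"
proof (induct n)
  case 0
  then show ?case by (simp add: Psi_1)
next
  case (Suc n)
  have "qq * Psi (Asc (Suc n)) - (Psi (Asc (Suc n)) - qfact n) / qq ^ Suc n = qfact n"
    using Psi_qshift_px_mult[of "Asc n"] Psi_px_mult_Asc[of n 1] qshift_px_mult_Asc[of n] Suc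
    by (simp add: poly_Asc_0)
  then have "Psi (Asc (Suc n)) * (qq ^ Suc (Suc n) - 1) = qfact n * (qq ^ Suc n - 1)"
    by (simp add: field_simps)
  then have "Psi (Asc (Suc n)) * qint (Suc (Suc n)) = qfact (Suc n)"
    by (simp add: qq_power_minus_1 qfact_Suc del: power_Suc)
  then show ?case by (simp add: field_simps)
qed

lemma qshift_px_mult_Asc_Desc:
  "qshift (px * Asc a * Desc c) = Polynomial.smult (- (qq ^ c)) (Asc (Suc a) * xDesc c)"
  by (simp only: pcompose_mult[of "px * Asc a"] qshift_px_mult_Asc qshift_Desc mult_smult_right)

lemma Psi_Asc_xDesc_Suc:
  "Psi (Asc a * xDesc (Suc c)) = - (qq ^ Suc c * Psi (Asc (Suc a) * xDesc c)) - qfact a * qfact c"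
proof -
  have "px * (Asc a * Desc c) = Asc a * xDesc (Suc c)"
    by (simp add: xDesc_Suc)
  then show ?thesis
    using Psi_qshift_px_mult[of "Asc a * Desc c"] qshift_px_mult_Asc_Desc[of a c]
    by (simp add: Psi.smult Psi.uminus poly_Asc_0 poly_Desc_0 algebra_simps)
qed

lemma Psi_Asc_xDesc: "Psi (Asc a * xDesc c) = - (qfact a * qfact c / qint (a + c + 1))"
proof (induct c arbitrary: a)
  case 0
  then show ?case by (simp add: Psi.uminus Psi_Asc)
next
  case (Suc c)
  have IH: "Psi (Asc (Suc a) * xDesc c) = - (qfact (Suc a) * qfact c / qint (a + c + 2))"
    using Suc[of "Suc a"] by simp
  have sum: "qint (a + c + 2) = qint (Suc c) + qq ^ Suc c * qint (Suc a)"
    using qint_add[of "Suc c" "Suc a"] by (simp add: add_ac)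
  have "qint (Suc c) + qq ^ Suc c * qint (Suc a) \<noteq> 0"
    unfolding sum[symmetric] by simp
  then have "Psi (Asc a * xDesc (Suc c)) = - (qfact a * qfact (Suc c) / qint (a + c + 2))"
    unfolding Psi_Asc_xDesc_Suc IH sum by (simp add: qfact_Suc field_simps)
  then show ?case by simp
qed

lemma Psi_Asc_Asc_xDesc_Suc:
  "qq ^ Suc a * qq ^ Suc c * Psi (Asc (Suc a) * Asc (Suc b) * xDesc c)
     = qint (Suc a) * Psi (Asc a * Asc b * xDesc (Suc c))
       - Psi (Asc (Suc a) * Asc b * xDesc (Suc c))"
proof -
  have "qshift ((px * Asc a) * (px * Asc b) * Desc c)
      = Polynomial.smult (- (qq ^ c)) (Asc (Suc a) * Asc (Suc b) * xDesc c)"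
    by (simp only: pcompose_mult[of "px * Asc a * (px * Asc b)"] pcompose_mult[of "px * Asc a"]
        qshift_px_mult_Asc qshift_Desc mult_smult_right)
  moreover have "(px * Asc a) * (px * Asc b) * Desc c = px * (px * (Asc a * Asc b * Desc c))"
    by (simp only: mult_ac)
  moreover have "(px * Asc a) * (px * Asc b) * Desc c = px * Asc a * (Asc b * xDesc (Suc c))"
    by (simp only: xDesc_Suc mult_ac)
  ultimately have "qq * - (qq ^ c) * Psi (Asc (Suc a) * Asc (Suc b) * xDesc c)
      = (Psi (Asc (Suc a) * (Asc b * xDesc (Suc c)))
         - qint (Suc a) * Psi (Asc a * (Asc b * xDesc (Suc c)))) / qq ^ Suc a"
    using Psi_qshift_px2_mult[of "Asc a * Asc b * Desc c"]
      Psi_px_mult_Asc[of a "Asc b * xDesc (Suc c)"]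
    by (simp add: Psi.smult Psi.uminus)
  then show ?thesis
    by (simp add: field_simps mult_ac)
qed

lemma Psi_Asc_Asc_xDesc:
  "Psi (Asc a * Asc b * xDesc c)
     = - (qfact (a + c) * qfact (b + c) * qfact a * qfact b / qfact (a + b + c + 1))"
proof (induct b arbitrary: a c)
  case 0
  then show ?case by (simp add: Psi_Asc_xDesc qfact_Suc field_simps)
next
  case (Suc b)
  show ?case
  proof (cases a)
    case 0
    then show ?thesis
      using Psi_Asc_xDesc[of "Suc b" c] by (simp add: qfact_Suc field_simps add_ac)
  next
    case (Suc a')
    define S where "S = qint (a' + c + 2) + qq ^ (a' + c + 2) * qint (Suc b)"
    have S: "qint (a' + b + c + 3) = S"
    proof -
      have "a' + b + c + 3 = (a' + c + 2) + Suc b" by simp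
      then show ?thesis unfolding S_def by (simp only: qint_add)
    qed
    then have "S \<noteq> 0"
      by (metis qint_Suc_nonzero add_2_eq_Suc' add_Suc_right numeral_3_eq_3)
    have IH1: "Psi (Asc a' * Asc b * xDesc (Suc c)) = - (qfact (a' + c + 1) * qfact (b + c + 1)
        * qfact a' * qfact b / qfact (a' + b + c + 2))"
      using Suc.hyps[of a' "Suc c"] by simp
    have IH2: "Psi (Asc (Suc a') * Asc b * xDesc (Suc c))
        = - (qfact (a' + c + 1) * qint (a' + c + 2) * qfact (b + c + 1)
          * (qfact a' * qint (Suc a')) * qfact b / (qfact (a' + b + c + 2) * S))"
      using Suc.hyps[of "Suc a'" "Suc c"] S by (simp add: qfact_Suc eval_nat_numeral)
    have "qq ^ Suc a' * qq ^ Suc c * Psi (Asc (Suc a') * Asc (Suc b) * xDesc c)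
      = qq ^ Suc a' * qq ^ Suc c * - (qfact (a' + c + 1) * qfact (b + c + 1)
        * (qfact a' * qint (Suc a')) * (qfact b * qint (Suc b)) / (qfact (a' + b + c + 2) * S))"
      unfolding Psi_Asc_Asc_xDesc_Suc IH1 IH2 using \<open>S \<noteq> 0\<close>
      by (simp add: field_simps) (simp add: S_def algebra_simps power_add)
    then have "Psi (Asc (Suc a') * Asc (Suc b) * xDesc c)
        = - (qfact (a' + c + 1) * qfact (b + c + 1) * (qfact a' * qint (Suc a'))
          * (qfact b * qint (Suc b)) / (qfact (a' + b + c + 2) * S))"
      by (rule mult_left_cancel[THEN iffD1, rotated]) simp
    then show ?thesis
      using S \<open>a = Suc a'\<close> by (simp add: qfact_Suc eval_nat_numeral add_ac)
  qed
qed

lemma Psi_Asc_Asc_xDesc_xDesc_Suc: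
  "Psi (Asc a * Asc b * xDesc (Suc c) * xDesc (Suc d))
     = qq ^ (c + d + 1) * Psi (Asc (Suc a) * Asc (Suc b) * xDesc c * xDesc d)"
proof -
  have "qshift ((px * Asc a) * (px * Asc b) * Desc c * Desc d)
      = Polynomial.smult (qq ^ d * qq ^ c) (Asc (Suc a) * Asc (Suc b) * xDesc c * xDesc d)"
    by (simp only: pcompose_mult[of "px * Asc a * (px * Asc b) * Desc c"]
        pcompose_mult[of "px * Asc a * (px * Asc b)"] pcompose_mult[of "px * Asc a"]
        qshift_px_mult_Asc qshift_Desc mult_smult_right mult_smult_left smult_smult
        mult_minus_left minus_mult_right minus_minus)
  moreover have "(px * Asc a) * (px * Asc b) * Desc c * Desc d
      = px * (px * (Asc a * Asc b * Desc c * Desc d))"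
    by (simp only: mult_ac)
  moreover have "(px * Asc a) * (px * Asc b) * Desc c * Desc d
      = Asc a * Asc b * xDesc (Suc c) * xDesc (Suc d)"
    by (simp only: xDesc_Suc mult_ac)
  ultimately show ?thesis
    using Psi_qshift_px2_mult[of "Asc a * Asc b * Desc c * Desc d"]
    by (simp add: Psi.smult power_add mult_ac)
qed

lemma Psi_Asc_Asc_xDesc_xDesc:
  "Psi (Asc a * Asc b * xDesc c * xDesc d) = qq ^ (c * d) * qfact (a + c) * qfact (b + c)
     * qfact (a + d) * qfact (b + d) / qfact (a + b + c + d + 1)"
proof (induct d arbitrary: a b c)
  case 0
  then show ?case by (simp add: Psi.uminus Psi_Asc_Asc_xDesc)
next
  case (Suc d)
  show ?case
  proof (cases c)
    case 0
    then have "Psi (Asc a * Asc b * xDesc c * xDesc (Suc d))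
        = - Psi (Asc a * Asc b * xDesc (Suc d))"
      by (simp add: Psi.uminus)
    then show ?thesis
      using 0 Psi_Asc_Asc_xDesc[of a b "Suc d"] by (simp add: mult_ac add_ac)
  next
    case (Suc c')
    then show ?thesis
      using Psi_Asc_Asc_xDesc_xDesc_Suc[of a b c' d] Suc.hyps[of "Suc a" "Suc b" c']
      by (simp add: power_add algebra_simps)
  qed
qed


section \<open>The q-difference operator\<close>

text \<open>\<open>qdiff k u = \<Sum>\<^sub>m c\<^sub>k\<^sub>,\<^sub>m u m\<close> where \<open>\<Sum>\<^sub>m c\<^sub>k\<^sub>,\<^sub>m z\<^sup>m = (1 - z)(1 - q z) \<cdots> (1 - q\<^sup>k\<^sup>-\<^sup>1 z)\<close>;
  hence it annihilates \<open>u m = q\<^sup>-\<^sup>e\<^sup>m\<close> for \<open>e < k\<close>.\<close>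

fun qdiff :: "nat \<Rightarrow> (nat \<Rightarrow> qf) \<Rightarrow> qf" where
  "qdiff 0 u = u 0"
| "qdiff (Suc k) u = qdiff k u - qq ^ k * qdiff k (\<lambda>m. u (Suc m))"

lemma qdiff_cong: "(\<And>m. m \<le> k \<Longrightarrow> u m = v m) \<Longrightarrow> qdiff k u = qdiff k v"
proof (induct k arbitrary: u v)
  case 0
  then show ?case by simp
next
  case (Suc k)
  have "qdiff k u = qdiff k v" "qdiff k (\<lambda>m. u (Suc m)) = qdiff k (\<lambda>m. v (Suc m))"
    using Suc.prems by (auto intro: Suc.hyps)
  then show ?case by simp
qed

lemma qdiff_add: "qdiff k (\<lambda>m. u m + v m) = qdiff k u + qdiff k v"
  by (induct k arbitrary: u v) (simp_all add: algebra_simps)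

lemma qdiff_cmult: "qdiff k (\<lambda>m. c * u m) = c * qdiff k u"
  by (induct k arbitrary: u) (simp_all add: algebra_simps)

lemma qdiff_sum: "finite A \<Longrightarrow> qdiff k (\<lambda>m. \<Sum>i\<in>A. f i m) = (\<Sum>i\<in>A. qdiff k (f i))"
  by (induct A rule: finite_induct) (simp_all add: qdiff_add qdiff_cmult[of k 0, simplified])

definition qdiff_coeff :: "nat \<Rightarrow> nat \<Rightarrow> qf" where
  "qdiff_coeff k m = qdiff k (\<lambda>i. if i = m then 1 else 0)"

lemma qdiff_eq_sum: "qdiff k u = (\<Sum>m\<le>k. qdiff_coeff k m * u m)"
proof -
  have "qdiff k u = qdiff k (\<lambda>i. \<Sum>m\<le>k. u m * (if i = m then 1 else 0))"
    by (rule qdiff_cong) (simp add: if_distrib[where f="\<lambda>x. _ * x"] cong: if_cong)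
  also have "\<dots> = (\<Sum>m\<le>k. qdiff_coeff k m * u m)"
    by (simp add: qdiff_sum qdiff_cmult qdiff_coeff_def mult.commute)
  finally show ?thesis .
qed

lemma qdiff_coeff_eq_0: "k < m \<Longrightarrow> qdiff_coeff k m = 0"
  unfolding qdiff_coeff_def
  using qdiff_cong[of k "\<lambda>i. if i = m then 1 else 0" "\<lambda>i. 0 * 1"] qdiff_cmult[of k 0 "\<lambda>i. 1"]
  by simp

lemma qdiff_coeff_diag: "qdiff_coeff k k = (\<Prod>i<k. - (qq ^ i))"
proof (induct k)
  case 0
  then show ?case by (simp add: qdiff_coeff_def)
next
  case (Suc k)
  have "qdiff_coeff (Suc k) (Suc k) = qdiff_coeff k (Suc k) - qq ^ k * qdiff_coeff k k"
    by (simp add: qdiff_coeff_def)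
  then show ?case using Suc by (simp add: qdiff_coeff_eq_0)
qed

lemma qdiff_coeff_diag_Suc: "qdiff_coeff (Suc k) (Suc k) = qdiff_coeff k k * - (qq ^ k)"
  by (simp add: qdiff_coeff_diag)

lemma qdiff_coeff_diag_nonzero: "qdiff_coeff k k \<noteq> 0"
  by (simp add: qdiff_coeff_diag)

lemma qdiff_geometric: "e < k \<Longrightarrow> qdiff k (\<lambda>m. inverse qq ^ (e * m)) = 0"
proof (induct k)
  case 0
  then show ?case by simp
next
  case (Suc k)
  have "qdiff k (\<lambda>m. inverse qq ^ (e * Suc m))
      = inverse qq ^ e * qdiff k (\<lambda>m. inverse qq ^ (e * m))"
    using qdiff_cmult[of k "inverse qq ^ e" "\<lambda>m. inverse qq ^ (e * m)"] by (simp add: power_add)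
  then have "qdiff (Suc k) (\<lambda>m. inverse qq ^ (e * m))
      = (1 - qq ^ k * inverse qq ^ e) * qdiff k (\<lambda>m. inverse qq ^ (e * m))"
    by (simp add: algebra_simps)
  moreover have "e = k \<or> e < k"
    using Suc.prems by auto
  ultimately show ?case
    using Suc.hyps by (auto simp: power_inverse)
qed

lemma qdiff_poly: "degree p < k \<Longrightarrow> qdiff k (\<lambda>m. poly p (inverse qq ^ m)) = 0"
  by (simp add: poly_altdef power_mult[symmetric] mult.commute qdiff_sum qdiff_cmult
      qdiff_geometric)

lemma qdiff_qpower_div_qint:
  "qdiff k (\<lambda>m. qq ^ m / qint (Suc n + m)) = qfact k * qfact n / qfact (Suc n + k)"
proof (induct k arbitrary: n)
  case 0
  then show ?case by (simp add: qfact_Suc)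
next
  case (Suc k)
  have shift: "qdiff k (\<lambda>m. qq ^ Suc m / qint (Suc n + Suc m))
      = qq * qdiff k (\<lambda>m. qq ^ m / qint (Suc (Suc n) + m))"
    using qdiff_cmult[of k qq "\<lambda>m. qq ^ m / qint (Suc (Suc n) + m)"] by simp
  define N where "N = qint (Suc (Suc (n + k)))"
  have N: "N = qint (Suc k) + qq ^ Suc k * qint (Suc n)"
    unfolding N_def using qint_add[of "Suc k" "Suc n"] by (simp add: add_ac)
  have fact_N: "qfact (Suc (Suc (n + k))) = qfact (Suc (n + k)) * N"
    by (simp add: N_def qfact_Suc)
  have "qdiff (Suc k) (\<lambda>m. qq ^ m / qint (Suc n + m))
      = qfact k * qfact n / qfact (Suc (n + k))
        - qq ^ Suc k * (qfact k * qfact (Suc n) / qfact (Suc (Suc (n + k))))"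
    unfolding qdiff.simps shift Suc.hyps by simp
  also have "\<dots> = qfact k * qfact n * (N - qq ^ Suc k * qint (Suc n)) / (qfact (Suc (n + k)) * N)"
    unfolding fact_N qfact_Suc[of n] by (simp add: N_def field_simps)
  also have "\<dots> = qfact (Suc k) * qfact n / qfact (Suc n + Suc k)"
    using fact_N by (simp add: N qfact_Suc[of k] mult_ac)
  finally show ?case .
qed


section \<open>Biorthogonal polynomials for the Hankel matrix\<close>

definition Desc_seg :: "nat \<Rightarrow> nat \<Rightarrow> qf poly" where
  "Desc_seg c m = (\<Prod>i\<in>{c..<c + m}. [:qint i, -1:])"

lemma Desc_seg_0 [simp]: "Desc_seg c 0 = 1"
  by (simp add: Desc_seg_def)

lemma Desc_seg_Suc: "Desc_seg c (Suc m) = Desc_seg c m * [:qint (c + m), -1:]"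
  by (simp add: Desc_seg_def)

lemma xDesc_mult_Desc_seg: "xDesc c * Desc_seg c m = xDesc (c + m)"
proof (induct m)
  case 0
  then show ?case by simp
next
  case (Suc m)
  have "xDesc c * Desc_seg c (Suc m) = xDesc c * Desc_seg c m * [:qint (c + m), -1:]"
    by (simp only: Desc_seg_Suc mult.assoc)
  then show ?case
    by (simp only: Suc xDesc_mult_linear add_Suc_right)
qed

lemma degree_Desc_seg: "degree (Desc_seg c m) = m"
  and coeff_Desc_seg: "coeff (Desc_seg c m) m = (-1) ^ m"
proof (induct m)
  case 0
  show "degree (Desc_seg c 0) = 0" "coeff (Desc_seg c 0) 0 = (-1) ^ 0" by simp_all
next
  case (Suc m)
  then have "Desc_seg c m \<noteq> 0" by auto
  then have "degree (Desc_seg c (Suc m)) = degree (Desc_seg c m) + 1"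
    unfolding Desc_seg_Suc by (subst degree_mult_eq) simp_all
  then show "degree (Desc_seg c (Suc m)) = Suc m"
    using Suc by simp
  then show "coeff (Desc_seg c (Suc m)) (Suc m) = (-1) ^ Suc m"
    using Suc lead_coeff_mult[of "Desc_seg c m" "[:qint (c + m), -1:]"] by (simp add: Desc_seg_Suc)
qed

lemma qint_as_poly:
  "inverse (qq ^ m) * qint (n + m)
     = poly (Polynomial.smult (inverse (qq - 1)) [:qq ^ n, -1:]) (inverse qq ^ m)"
proof -
  have "poly (Polynomial.smult (inverse (qq - 1)) [:qq ^ n, -1:]) (inverse qq ^ m)
      = (qq ^ n - inverse (qq ^ m)) / (qq - 1)"
    by (simp add: power_inverse divide_inverse algebra_simps)
  also have "\<dots> = inverse (qq ^ m) * ((qq ^ m * qq ^ n - 1) / (qq - 1))"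
    by (simp add: field_simps)
  finally show ?thesis
    by (simp add: qint_def power_add mult.commute)
qed

lemma x2W_Suc: "x2W (Suc a) (Suc b) c d = Asc a * Asc b * xDesc c * xDesc d"
  by (simp add: x2W_def)

text \<open>In this context \<open>a\<close> and \<open>b\<close> stand for \<open>a - 1\<close> and \<open>b - 1\<close> of the theorem.\<close>

context
  fixes a b c d :: nat
begin

text \<open>The weight \<open>rho k m\<close> cancels the factorials of the moment
  \<open>\<Psi>(Asc a Asc b xDesc (c + m) xDesc (d + j))\<close> that do not involve \<open>j\<close>.\<close>

definition rho :: "nat \<Rightarrow> nat \<Rightarrow> qf" where
  "rho k m = qq ^ m / qq ^ (m * (d + k)) * qfact (a + b + c + d + m + k)
     / (qfact (a + c + m) * qfact (b + c + m))"

definition orth_poly :: "nat \<Rightarrow> qf poly" where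
  "orth_poly k = (\<Sum>m\<le>k. Polynomial.smult (qdiff_coeff k m * rho k m) (Desc_seg c m))"

definition moment_factor :: "nat \<Rightarrow> qf" where
  "moment_factor j = qq ^ (c * (d + j)) * qfact (a + d + j) * qfact (b + d + j)"

lemma degree_orth_poly: "degree (orth_poly k) \<le> k"
  unfolding orth_poly_def
  by (rule degree_sum_le) (auto intro: order.trans[OF degree_smult_le] simp: degree_Desc_seg)

lemma coeff_orth_poly: "coeff (orth_poly k) k = qdiff_coeff k k * rho k k * (-1) ^ k"
proof -
  have "coeff (orth_poly k) k = (\<Sum>m\<le>k. qdiff_coeff k m * rho k m * coeff (Desc_seg c m) k)"
    unfolding orth_poly_def by (simp add: coeff_sum)
  also have "\<dots> = (\<Sum>m\<in>{k}. qdiff_coeff k m * rho k m * coeff (Desc_seg c m) k)"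
    by (rule sum.mono_neutral_right) (auto simp: coeff_eq_0 degree_Desc_seg)
  finally show ?thesis by (simp add: coeff_Desc_seg)
qed

lemma Psi_Desc_seg_orth_poly:
  "Psi (Desc_seg d j * orth_poly k * x2W (Suc a) (Suc b) c d)
     = qdiff k (\<lambda>m. rho k m * Psi (Asc a * Asc b * xDesc (c + m) * xDesc (d + j)))"
proof -
  have "Desc_seg d j * Desc_seg c m * x2W (Suc a) (Suc b) c d
      = Asc a * Asc b * (xDesc c * Desc_seg c m) * (xDesc d * Desc_seg d j)" for m
    by (simp add: x2W_Suc mult_ac)
  then have "Psi (Desc_seg d j * orth_poly k * x2W (Suc a) (Suc b) c d)
      = (\<Sum>m\<le>k. qdiff_coeff k m * (rho k m * Psi (Asc a * Asc b * xDesc (c + m) * xDesc (d + j))))"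
    unfolding orth_poly_def
    by (simp add: sum_distrib_left sum_distrib_right Psi.sum Psi.smult xDesc_mult_Desc_seg
        mult.assoc)
  then show ?thesis
    by (simp add: qdiff_eq_sum)
qed

lemma rho_mult_moment:
  "rho k m * Psi (Asc a * Asc b * xDesc (c + m) * xDesc (d + j))
   = moment_factor j * (qq ^ m / qq ^ (m * (d + k)) * qq ^ (m * (d + j))
       * (qfact (a + b + c + d + m + k) / qfact (a + b + c + d + m + j + 1)))"
proof -
  have "qq ^ ((c + m) * (d + j)) = qq ^ (c * (d + j)) * qq ^ (m * (d + j))"
    by (simp add: power_add add_mult_distrib)
  moreover have "a + b + (c + m) + (d + j) + 1 = a + b + c + d + m + j + 1"
    by simp
  ultimately show ?thesis
    unfolding rho_def moment_factor_def Psi_Asc_Asc_xDesc_xDesc by (simp add: field_simps add_ac)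
qed

text \<open>For \<open>j < k\<close> the summand of the \<open>q\<close>-difference is a polynomial of degree \<open>k - 1 - j\<close>
  in \<open>q\<^sup>-\<^sup>m\<close>, which the \<open>k\<close>-th \<open>q\<close>-difference annihilates.\<close>

lemma Psi_Desc_seg_orth_poly_eq_0:
  assumes "j < k"
  shows "Psi (Desc_seg d j * orth_poly k * x2W (Suc a) (Suc b) c d) = 0"
proof -
  define t where "t = k - 1 - j"
  define n where "n = a + b + c + d + j + 2"
  define P where "P = (\<Prod>i<t. Polynomial.smult (inverse (qq - 1)) [:qq ^ (n + i), -1:])"
  have "degree P \<le> (\<Sum>i<t. 1)"
    unfolding P_def
    by (rule order.trans[OF degree_prod_sum_le sum_mono])
      (auto intro: order.trans[OF degree_smult_le])
  then have "degree P < k"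
    using assms by (simp add: t_def)
  have "rho k m * Psi (Asc a * Asc b * xDesc (c + m) * xDesc (d + j))
      = moment_factor j * poly P (inverse qq ^ m)" for m
  proof -
    have k: "k = j + 1 + t"
      using assms by (simp add: t_def)
    have "qq ^ m / qq ^ (m * (d + k)) * qq ^ (m * (d + j)) = inverse (qq ^ m) ^ t"
      unfolding k by (simp add: algebra_simps power_add power_mult field_simps)
    moreover have "qfact (a + b + c + d + m + k)
        = qfact (a + b + c + d + m + j + 1) * (\<Prod>i<t. qint (n + i + m))"
      using qfact_add[of "a + b + c + d + m + j + 1" t] by (simp add: k n_def add_ac)
    moreover have "inverse (qq ^ m) ^ t * (\<Prod>i<t. qint (n + i + m))
        = (\<Prod>i<t. inverse (qq ^ m) * qint (n + i + m))"
      by (simp add: prod.distrib)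
    moreover have "\<dots> = poly P (inverse qq ^ m)"
      by (simp only: P_def poly_prod qint_as_poly)
    ultimately show ?thesis
      by (simp add: rho_mult_moment)
  qed
  then show ?thesis
    by (simp add: Psi_Desc_seg_orth_poly qdiff_cmult qdiff_poly \<open>degree P < k\<close>)
qed

lemma Psi_Desc_seg_orth_poly_diag:
  "Psi (Desc_seg d k * orth_poly k * x2W (Suc a) (Suc b) c d)
     = moment_factor k
       * (qfact k * qfact (a + b + c + d + k) / qfact (Suc (a + b + c + d + k) + k))"
proof -
  have summand: "rho k m * Psi (Asc a * Asc b * xDesc (c + m) * xDesc (d + k))
      = moment_factor k * (qq ^ m / qint (Suc (a + b + c + d + k) + m))" for m
  proof -
    have "qfact (a + b + c + d + m + k + 1)
        = qfact (a + b + c + d + m + k) * qint (Suc (a + b + c + d + k) + m)"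
      using qfact_Suc[of "a + b + c + d + m + k"] by (simp add: add_ac)
    then show ?thesis
      unfolding rho_mult_moment by (simp add: field_simps)
  qed
  show ?thesis
    unfolding Psi_Desc_seg_orth_poly summand qdiff_cmult qdiff_qpower_div_qint ..
qed

lemma rho_diag_nonzero: "rho k k \<noteq> 0"
  by (simp add: rho_def)

definition gram_diag :: "nat \<Rightarrow> qf" where
  "gram_diag k = moment_factor k
     * (qfact k * qfact (a + b + c + d + k) / qfact (Suc (a + b + c + d + k) + k))
     / (qdiff_coeff k k * rho k k)"

lemma det_Mmat_eq_prod_gram_diag: "det (Mmat (Suc a) (Suc b) c d n) = (\<Prod>k<n. gram_diag k)"
proof -
  interpret W: linear_poly_functional "\<lambda>p. Psi (p * x2W (Suc a) (Suc b) c d)"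
    by (rule Psi.mult_right)
  have "(\<Prod>j<n. coeff (Desc_seg d j) j) * det (Mmat (Suc a) (Suc b) c d n)
        * (\<Prod>k<n. coeff (orth_poly k) k)
      = (\<Prod>k<n. Psi (Desc_seg d k * orth_poly k * x2W (Suc a) (Suc b) c d))"
    unfolding Mmat_def
    by (rule W.hankel_det_biorthogonal)
      (simp_all add: degree_Desc_seg degree_orth_poly Psi_Desc_seg_orth_poly_eq_0)
  moreover have "(\<Prod>j<n. coeff (Desc_seg d j) j) * (\<Prod>k<n. coeff (orth_poly k) k)
      = (\<Prod>k<n. qdiff_coeff k k * rho k k)"
    by (simp add: coeff_Desc_seg coeff_orth_poly mult_ac flip: prod.distrib power_add)
  ultimately have "det (Mmat (Suc a) (Suc b) c d n) * (\<Prod>k<n. qdiff_coeff k k * rho k k)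
      = (\<Prod>k<n. Psi (Desc_seg d k * orth_poly k * x2W (Suc a) (Suc b) c d))"
    by (simp only: mult_ac)
  moreover have "(\<Prod>k<n. qdiff_coeff k k * rho k k) \<noteq> 0"
    by (simp add: qdiff_coeff_diag_nonzero rho_diag_nonzero)
  ultimately have "det (Mmat (Suc a) (Suc b) c d n)
      = (\<Prod>k<n. Psi (Desc_seg d k * orth_poly k * x2W (Suc a) (Suc b) c d))
        / (\<Prod>k<n. qdiff_coeff k k * rho k k)"
    by (simp add: field_simps)
  then show ?thesis
    unfolding gram_diag_def Psi_Desc_seg_orth_poly_diag prod_dividef .
qed

lemma gram_diag_0: "gram_diag 0 = Cabcd (Suc a) (Suc b) c d"
  unfolding gram_diag_def Cabcd_def x2W_Suc Psi_Asc_Asc_xDesc_xDesc moment_factor_def rho_def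
  by (simp add: qdiff_coeff_diag qfact_Suc field_simps add_ac)

lemma moment_factor_Suc:
  "moment_factor (Suc k)
     = moment_factor k * (qq ^ c * qint (Suc (a + d + k)) * qint (Suc (b + d + k)))"
  unfolding moment_factor_def by (simp add: qfact_Suc power_add algebra_simps)

lemma rho_diag_Suc:
  "rho (Suc k) (Suc k) = rho k k
     * (qq * qint (a + b + c + d + 2 * k + 1) * qint (a + b + c + d + 2 * k + 2)
        / (qq ^ (d + 2 * k + 1) * qint (Suc (a + c + k)) * qint (Suc (b + c + k))))"
proof -
  have "Suc k * (d + Suc k) = k * (d + k) + (d + 2 * k + 1)"
    by (simp add: algebra_simps)
  then have "qq ^ (Suc k * (d + Suc k)) = qq ^ (k * (d + k)) * qq ^ (d + 2 * k + 1)"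
    by (simp only: power_add)
  moreover have "a + b + c + d + Suc k + Suc k = Suc (Suc (a + b + c + d + k + k))"
    by simp
  ultimately show ?thesis
    unfolding rho_def by (simp add: qfact_Suc field_simps mult_2 mult_2_right)
qed

definition det_ratio :: "nat \<Rightarrow> qf" where
  "det_ratio i = (qint i * qint (Suc a + c + i - 1) * qint (Suc b + c + i - 1)
        * qint (Suc a + d + i - 1) * qint (Suc b + d + i - 1) * qint (Suc a + Suc b + c + d + i - 2))
       / (qint (Suc a + Suc b + c + d + 2 * i - 3) * qint (Suc a + Suc b + c + d + 2 * i - 2) ^ 2
        * qint (Suc a + Suc b + c + d + 2 * i - 1))"

lemma det_ratio_Suc:
  "det_ratio (Suc k) = (qint (Suc k) * qint (Suc (a + c + k)) * qint (Suc (b + c + k))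
        * qint (Suc (a + d + k)) * qint (Suc (b + d + k)) * qint (Suc (a + b + c + d + k)))
       / (qint (a + b + c + d + 2 * k + 1) * qint (a + b + c + d + 2 * k + 2) ^ 2
        * qint (a + b + c + d + 2 * k + 3))"
  unfolding det_ratio_def by (simp add: eval_nat_numeral)

lemma gram_diag_Suc:
  "gram_diag (Suc k) = gram_diag k * (- (qq ^ (c + d)) * qq ^ k * det_ratio (Suc k))"
proof -
  have quotient: "K' * F' / (t' * r') = K * F / (t * r) * (x * y / (z * w))"
    if "K' = K * x" "F' = F * y" "t' = t * z" "r' = r * w" "t \<noteq> 0" "r \<noteq> 0" "z \<noteq> 0" "w \<noteq> 0"
    for K K' F F' t t' r r' x y z w :: qf
    using that by (simp add: field_simps)
  have "gram_diag (Suc k) = gram_diag k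
      * ((qq ^ c * qint (Suc (a + d + k)) * qint (Suc (b + d + k)))
        * (qint (Suc k) * qint (Suc (a + b + c + d + k))
           / (qint (a + b + c + d + 2 * k + 2) * qint (a + b + c + d + 2 * k + 3)))
        / (- (qq ^ k) * (qq * qint (a + b + c + d + 2 * k + 1) * qint (a + b + c + d + 2 * k + 2)
           / (qq ^ (d + 2 * k + 1) * qint (Suc (a + c + k)) * qint (Suc (b + c + k))))))"
    unfolding gram_diag_def
    by (rule quotient[OF moment_factor_Suc qfact_ratio_Suc qdiff_coeff_diag_Suc rho_diag_Suc])
      (simp_all add: qdiff_coeff_diag_nonzero rho_diag_nonzero)
  also have "\<dots> = gram_diag k * (- (qq ^ (c + d)) * qq ^ k * det_ratio (Suc k))"
  proof -
    have "qq ^ (d + 2 * k + 1) = qq ^ d * qq ^ k * qq ^ k * qq"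
      by (simp add: power_add mult_2)
    then show ?thesis
      unfolding det_ratio_Suc by (simp add: field_simps power_add power2_eq_square)
  qed
  finally show ?thesis .
qed

end

lemma prod_lessThan_prod_atLeastAtMost:
  "(\<Prod>k<n. \<Prod>i=1..k. R i) = (\<Prod>i=1..n - 1. (R i :: 'a::comm_monoid_mult) ^ (n - i))"
proof (induct n)
  case 0
  then show ?case by simp
next
  case (Suc n)
  have "(\<Prod>i=1..n. R i ^ (Suc n - i)) = (\<Prod>i=1..n. R i ^ (n - i)) * (\<Prod>i=1..n. R i)"
    by (simp add: Suc_diff_le prod.distrib mult.commute flip: power_Suc2)
  moreover have "(\<Prod>i=1..n. R i ^ (n - i)) = (\<Prod>i=1..n - 1. R i ^ (n - i))"
    by (cases n) (simp_all add: prod.nat_ivl_Suc')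
  ultimately show ?case
    using Suc by simp
qed

lemma prod_lessThan_of_ratio:
  fixes h R :: "nat \<Rightarrow> 'a::comm_monoid_mult"
  assumes step: "\<And>k. h (Suc k) = h k * (u * v ^ k * R (Suc k))"
  shows "(\<Prod>k<n. h k)
    = u ^ (n choose 2) * v ^ (n choose 3) * h 0 ^ n * (\<Prod>i=1..n - 1. R i ^ (n - i))"
proof -
  have choose_2: "Suc k choose 2 = (k choose 2) + k"
    and choose_3: "Suc k choose 3 = (k choose 3) + (k choose 2)" for k
    by (simp_all add: numeral_2_eq_2 numeral_3_eq_3)
  have choose_0: "0 choose 2 = 0" "0 choose 3 = 0"
    by (simp_all add: numeral_2_eq_2 numeral_3_eq_3)
  have closed: "h k = h 0 * u ^ k * v ^ (k choose 2) * (\<Prod>i=1..k. R i)" for k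
    by (induct k) (simp_all add: step choose_0 choose_2 power_add prod.nat_ivl_Suc' mult_ac)
  then have "(\<Prod>k<n. h k) = (\<Prod>k<n. h 0 * u ^ k * v ^ (k choose 2) * (\<Prod>i=1..k. R i))"
    by (intro prod.cong refl)
  moreover have "(\<Prod>k<n. u ^ k) = u ^ (n choose 2)"
    by (induct n) (simp_all add: choose_0 choose_2 power_add)
  moreover have "(\<Prod>k<n. v ^ (k choose 2)) = v ^ (n choose 3)"
    by (induct n) (simp_all add: choose_0 choose_3 power_add)
  moreover note prod_lessThan_prod_atLeastAtMost[of R n]
  ultimately show ?thesis
    by (simp add: prod.distrib mult_ac)
qed

theorem mainTheorem13:
  fixes a b c d n :: nat
  assumes "a \<ge> 1" and "b \<ge> 1" and "n \<ge> 1"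
  shows "det (Mmat a b c d n) =
    (- (qq ^ (c + d))) ^ (n choose 2) * qq ^ (n choose 3) * Cabcd a b c d ^ n *
    (\<Prod>i=1..n-1.
      ((qint i * qint (a + c + i - 1) * qint (b + c + i - 1) * qint (a + d + i - 1)
        * qint (b + d + i - 1) * qint (a + b + c + d + i - 2))
       / (qint (a + b + c + d + 2 * i - 3) * qint (a + b + c + d + 2 * i - 2) ^ 2
        * qint (a + b + c + d + 2 * i - 1))) ^ (n - i))"
proof -
  obtain a' b' where a: "a = Suc a'" and b: "b = Suc b'"
    using assms(1,2) by (metis Suc_le_D One_nat_def)
  have "det (Mmat a b c d n) = (\<Prod>k<n. gram_diag a' b' c d k)"
    unfolding a b by (rule det_Mmat_eq_prod_gram_diag)
  also have "\<dots> = (- (qq ^ (c + d))) ^ (n choose 2) * qq ^ (n choose 3) * gram_diag a' b' c d 0 ^ n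
      * (\<Prod>i=1..n - 1. det_ratio a' b' c d i ^ (n - i))"
    by (rule prod_lessThan_of_ratio) (rule gram_diag_Suc)
  finally show ?thesis
    unfolding gram_diag_0 det_ratio_def a b .
qed

end
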